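(* Let $B$ be a commutative Noetherian ring, $A=B[y]$, $r\ge3$, and let $b=b(y)=(b_1,\ldots,b_{-1})^t$ be in $\mathrm{IUm}_{2r}A$ (resp. $\mathrm{IUm}_{2r+1}A$). Let $s\in B\cap\langle b_1,\ldots,b_{r-1}\rangle$, the ideal being taken in $A$. Then there exists $m\in\mathbb{N}$ such that, with $z$ a new indeterminate, $$b(y+s^mz)\in EO(2r,A[z])^{\le r(r-1)/2+8r-4}\,b(y)\quad\text{resp.}\quad b(y+s^mz)\in EO(2r+1,A[z])^{\le r(r-1)/2+9r-5}\,b(y).$$
   Context: All rings are commutative with $1$. For a ring $R$: $O(2r,R)$ is the group of automorphisms of $R^{2r}$ preserving $q(x)=\sum_{i=1}^r x_ix_{-i}$, coordinates indexed by the basis $e_1,\ldots,e_r,e_{-r},\ldots,e_{-1}$ in this order; $O(2r+1,R)$ is the group of automorphisms of $R^{2r+1}$ with basis $e_1,\ldots,e_r,e_0,e_{-r},\ldots,e_{-1}$ preserving $q(x)=x_0^2+\sum_{i=1}^r x_ix_{-i}$. With $e$ the identity matrix and $e_{i,j}$ matrix units, elementary orthogonal transvections are $T_{i,j}(\xi)=e+\xi e_{i,j}-\xi e_{-j,-i}$ ($\xi\in R$, $i,j\in\{\pm1,\ldots,\pm r\}$, $i\ne\pm j$), and in the odd case also $T_{i,0}(\xi)=e+2\xi e_{i,0}-\xi e_{0,-i}-\xi^2e_{i,-i}$. $EO(m,R)^{\le N}$ is the set of products of at most $N$ elementary orthogonal transvections, and $EO(m,R)^{\le N}b=\{gb:g\in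 EO(m,R)^{\le N}\}$. $\mathrm{IUm}_{2r}R=\{b\in R^{2r}: b\text{ unimodular}, q(b)=0\}$, $\mathrm{IUm}_{2r+1}R=\{b\in R^{2r+1}:(b_1,\ldots,b_r,2b_0,b_{-r},\ldots,b_{-1})\text{ unimodular}, q(b)=0\}$. $b(y+s^mz)$ denotes the column obtained by substituting $y+s^mz$ for $y$ in each entry. *)

theory Defs
  imports "HOL-Computational_Algebra.Polynomial"
begin

definition is_ideal :: "'a::comm_ring_1 set \<Rightarrow> bool" where
  "is_ideal I \<longleftrightarrow> 0 \<in> I \<and> (\<forall>x\<in>I. \<forall>y\<in>I. x + y \<in> I) \<and> (\<forall>a. \<forall>x\<in>I. a * x \<in> I)"

definition ideal_gen :: "'a::comm_ring_1 set \<Rightarrow> 'a set" where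
  "ideal_gen F = {x. \<exists>G c. finite G \<and> G \<subseteq> F \<and> x = (\<Sum>g\<in>G. c g * g)}"

definition noetherian :: "'a::comm_ring_1 itself \<Rightarrow> bool" where
  "noetherian _ \<longleftrightarrow> (\<forall>I::'a set. is_ideal I \<longrightarrow> (\<exists>F. finite F \<and> I = ideal_gen F))"

definition idx_even :: "nat \<Rightarrow> int set" where
  "idx_even r = {i. 1 \<le> \<bar>i\<bar> \<and> \<bar>i\<bar> \<le> int r}"

definition idx_odd :: "nat \<Rightarrow> int set" where
  "idx_odd r = {i. \<bar>i\<bar> \<le> int r}"

type_synonym 'a mat = "int \<Rightarrow> int \<Rightarrow> 'a"
type_synonym 'a vec = "int \<Rightarrow> 'a"

definition idm :: "'a::comm_ring_1 mat" where
  "idm i j = (if i = j then 1 else 0)"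

definition unit_mat :: "int \<Rightarrow> int \<Rightarrow> 'a::comm_ring_1 mat" where
  "unit_mat k l i j = (if i = k \<and> j = l then 1 else 0)"

definition mat_mult :: "int set \<Rightarrow> 'a::comm_ring_1 mat \<Rightarrow> 'a mat \<Rightarrow> 'a mat" where
  "mat_mult I M N i j = (\<Sum>k\<in>I. M i k * N k j)"

definition mat_vec :: "int set \<Rightarrow> 'a::comm_ring_1 mat \<Rightarrow> 'a vec \<Rightarrow> 'a vec" where
  "mat_vec I M v i = (\<Sum>k\<in>I. M i k * v k)"

definition transv :: "int \<Rightarrow> int \<Rightarrow> 'a::comm_ring_1 \<Rightarrow> 'a mat" where
  "transv i j \<xi> = (\<lambda>a b. idm a b + \<xi> * unit_mat i j a b - \<xi> * unit_mat (-j) (-i) a b)"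

definition transv0 :: "int \<Rightarrow> 'a::comm_ring_1 \<Rightarrow> 'a mat" where
  "transv0 i \<xi> = (\<lambda>a b. idm a b + 2 * \<xi> * unit_mat i 0 a b - \<xi> * unit_mat 0 (-i) a b
                        - \<xi>^2 * unit_mat i (-i) a b)"

definition EO_gens_even :: "nat \<Rightarrow> 'a::comm_ring_1 mat set" where
  "EO_gens_even r = {transv i j \<xi> | i j \<xi>. i \<in> idx_even r \<and> j \<in> idx_even r \<and> i \<noteq> j \<and> i \<noteq> -j}"

definition EO_gens_odd :: "nat \<Rightarrow> 'a::comm_ring_1 mat set" where
  "EO_gens_odd r = EO_gens_even r \<union> {transv0 i \<xi> | i \<xi>. i \<in> idx_even r}"

definition EO_le :: "int set \<Rightarrow> 'a::comm_ring_1 mat set \<Rightarrow> nat \<Rightarrow> 'a mat set" where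
  "EO_le I gens N = {foldr (mat_mult I) ts idm | ts. length ts \<le> N \<and> set ts \<subseteq> gens}"

definition EO_le_even :: "nat \<Rightarrow> nat \<Rightarrow> 'a::comm_ring_1 mat set" where
  "EO_le_even r N = EO_le (idx_even r) (EO_gens_even r) N"

definition EO_le_odd :: "nat \<Rightarrow> nat \<Rightarrow> 'a::comm_ring_1 mat set" where
  "EO_le_odd r N = EO_le (idx_odd r) (EO_gens_odd r) N"

definition unimodular :: "int set \<Rightarrow> 'a::comm_ring_1 vec \<Rightarrow> bool" where
  "unimodular I v \<longleftrightarrow> (\<exists>c. (\<Sum>i\<in>I. c i * v i) = 1)"

definition q_even :: "nat \<Rightarrow> 'a::comm_ring_1 vec \<Rightarrow> 'a" where
  "q_even r x = (\<Sum>i=1..int r. x i * x (-i))"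

definition q_odd :: "nat \<Rightarrow> 'a::comm_ring_1 vec \<Rightarrow> 'a" where
  "q_odd r x = x 0 ^ 2 + (\<Sum>i=1..int r. x i * x (-i))"

definition IUm_even :: "nat \<Rightarrow> 'a::comm_ring_1 vec set" where
  "IUm_even r = {b. unimodular (idx_even r) b \<and> q_even r b = 0}"

definition IUm_odd :: "nat \<Rightarrow> 'a::comm_ring_1 vec set" where
  "IUm_odd r = {b. unimodular (idx_odd r) (\<lambda>i. if i = 0 then 2 * b 0 else b i) \<and> q_odd r b = 0}"

text \<open>A = B[y] is 'b poly; A[z] is 'b poly poly with outer variable z.
  For p(y) in B[y], subst_yz s m p is p(y + s^m z) in B[y][z].\<close>
definition subst_yz :: "'b::comm_ring_1 \<Rightarrow> nat \<Rightarrow> 'b poly \<Rightarrow> 'b poly poly" where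
  "subst_yz s m p = poly (map_poly (\<lambda>c. [:[:c:]:]) p) ([:[:0, 1:]:] + [:0, [:s ^ m:]:])"

end

theory Submission
  imports Defs
begin

text \<open>Write \<open>b(y + z) = b + z w\<close> and \<open>s = \<langle>a, b\<^sub>+\<rangle>\<close> with \<open>a\<close> supported on \<open>1, \<dots>, r - 1\<close>.
  The relations \<open>\<langle>a, b\<^sub>+\<rangle> = s\<close> and \<open>q(b) = 0\<close> persist after the substitution, and, since \<open>z\<close>
  is not a zero divisor, they give polynomial identities between \<open>a\<close>, \<open>b\<close>, \<open>w\<close> and the tail of \<open>a\<close>,
  which survive scaling \<open>z\<close> to \<open>s\<^sup>3 z\<close>. With their help one writes down a Siegel element and
  two rank-one Levi elements of the parabolic subgroup stabilising \<open>span(e\<^sub>-\<^sub>1, \<dots>, e\<^sub>-\<^sub>r)\<close>, whose product maps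
  \<open>b\<close> to \<open>b(y + s\<^sup>3z) = b + s\<^sup>3z w\<close> (in the odd case after some root elements through \<open>e\<^sub>0\<close>).
  The Siegel element is a product of \<open>r(r - 1)/2\<close> transvections, and a rank-one Levi element
  \<open>1 + p q\<^sup>t\<close> with \<open>p\<^sub>l = 0\<close> is a commutator of elements with a unit vector as one factor,
  each of which is a product of at most \<open>r - 1\<close> transvections; counting gives the bounds.\<close>

definition dot_pos :: "nat \<Rightarrow> 'a::comm_ring_1 vec \<Rightarrow> 'a vec \<Rightarrow> 'a" where
  "dot_pos r x y = (\<Sum>j\<in>{1..int r}. x j * y j)"

definition dot_neg :: "nat \<Rightarrow> 'a::comm_ring_1 vec \<Rightarrow> 'a vec \<Rightarrow> 'a" where
  "dot_neg r x y = (\<Sum>j\<in>{1..int r}. x j * y (-j))"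

definition unit_vec :: "int \<Rightarrow> 'a::comm_ring_1 vec" where
  "unit_vec l k = (if k = l then 1 else 0)"

lemma dot_pos_commute: "dot_pos r x y = dot_pos r y x"
  by (simp add: dot_pos_def mult.commute)

lemma dot_pos_reflect: "dot_pos r (\<lambda>k. y (-k)) x = dot_neg r x y"
  by (simp add: dot_pos_def dot_neg_def mult.commute)

lemma dot_pos_add_left [simp]: "dot_pos r (\<lambda>k. x k + y k) z = dot_pos r x z + dot_pos r y z"
  by (simp add: dot_pos_def algebra_simps sum.distrib)

lemma dot_pos_add_right [simp]: "dot_pos r z (\<lambda>k. x k + y k) = dot_pos r z x + dot_pos r z y"
  by (simp add: dot_pos_def algebra_simps sum.distrib)

lemma dot_pos_diff_left [simp]: "dot_pos r (\<lambda>k. x k - y k) z = dot_pos r x z - dot_pos r y z"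
  by (simp add: dot_pos_def algebra_simps sum_subtractf)

lemma dot_pos_diff_right [simp]: "dot_pos r z (\<lambda>k. x k - y k) = dot_pos r z x - dot_pos r z y"
  by (simp add: dot_pos_def algebra_simps sum_subtractf)

lemma dot_pos_minus_left [simp]: "dot_pos r (\<lambda>k. - x k) z = - dot_pos r x z"
  by (simp add: dot_pos_def sum_negf)

lemma dot_pos_minus_right [simp]: "dot_pos r z (\<lambda>k. - x k) = - dot_pos r z x"
  by (simp add: dot_pos_def sum_negf)

lemma dot_pos_scale_left [simp]: "dot_pos r (\<lambda>k. c * x k) z = c * dot_pos r x z"
  by (simp add: dot_pos_def sum_distrib_left algebra_simps)

lemma dot_pos_scale_right [simp]: "dot_pos r z (\<lambda>k. c * x k) = c * dot_pos r z x"
  by (simp add: dot_pos_def sum_distrib_left algebra_simps)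

lemma dot_pos_scale_left' [simp]: "dot_pos r (\<lambda>k. x k * c) y = c * dot_pos r x y"
  by (simp add: dot_pos_def sum_distrib_left algebra_simps)

lemma dot_pos_scale_right' [simp]: "dot_pos r y (\<lambda>k. x k * c) = c * dot_pos r y x"
  by (simp add: dot_pos_def sum_distrib_left algebra_simps)

lemma dot_neg_add_left [simp]: "dot_neg r (\<lambda>k. x k + y k) z = dot_neg r x z + dot_neg r y z"
  by (simp add: dot_neg_def algebra_simps sum.distrib)

lemma dot_neg_add_right [simp]: "dot_neg r x (\<lambda>k. y k + z k) = dot_neg r x y + dot_neg r x z"
  by (simp add: dot_neg_def algebra_simps sum.distrib)

lemma dot_neg_minus_left [simp]: "dot_neg r (\<lambda>k. - x k) z = - dot_neg r x z"
  by (simp add: dot_neg_def sum_negf)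

lemma dot_neg_scale_left [simp]: "dot_neg r (\<lambda>k. c * x k) z = c * dot_neg r x z"
  by (simp add: dot_neg_def sum_distrib_left algebra_simps)

lemma dot_neg_scale_right [simp]: "dot_neg r x (\<lambda>k. c * y k) = c * dot_neg r x y"
  by (simp add: dot_neg_def sum_distrib_left algebra_simps)

lemma dot_pos_cong_left: "(\<And>k. 1 \<le> k \<Longrightarrow> k \<le> int r \<Longrightarrow> x k = x' k) \<Longrightarrow> dot_pos r x y = dot_pos r x' y"
  unfolding dot_pos_def by (rule sum.cong) auto

lemma dot_pos_cong_right: "(\<And>k. 1 \<le> k \<Longrightarrow> k \<le> int r \<Longrightarrow> y k = y' k) \<Longrightarrow> dot_pos r x y = dot_pos r x y'"
  unfolding dot_pos_def by (rule sum.cong) auto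

lemma dot_neg_cong_left: "(\<And>k. 1 \<le> k \<Longrightarrow> k \<le> int r \<Longrightarrow> x k = x' k) \<Longrightarrow> dot_neg r x y = dot_neg r x' y"
  unfolding dot_neg_def by (rule sum.cong) auto

lemma dot_pos_unit_vec_left [simp]: "1 \<le> l \<Longrightarrow> l \<le> int r \<Longrightarrow> dot_pos r (unit_vec l) v = v l"
  by (simp add: dot_pos_def unit_vec_def if_distrib[of "\<lambda>x. x * _"] cong: if_cong)

lemma dot_pos_unit_vec_right [simp]: "1 \<le> l \<Longrightarrow> l \<le> int r \<Longrightarrow> dot_pos r v (unit_vec l) = v l"
  using dot_pos_unit_vec_left dot_pos_commute by metis

lemma dot_neg_unit_vec_left [simp]: "1 \<le> l \<Longrightarrow> l \<le> int r \<Longrightarrow> dot_neg r (unit_vec l) v = v (-l)"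
  by (simp add: dot_neg_def unit_vec_def if_distrib[of "\<lambda>x. x * _"] cong: if_cong)

lemma dot_pos_restrict:
  "L \<subseteq> {1..int r} \<Longrightarrow> dot_pos r (\<lambda>k. if k \<in> L then f k else 0) y = (\<Sum>k\<in>L. f k * y k)"
  unfolding dot_pos_def by (simp add: if_distrib[of "\<lambda>x. x * _"] sum.If_cases Int_absorb1 cong: if_cong)

section \<open>Parabolic elements acting on columns\<close>

text \<open>In the basis \<open>e\<^sub>1, \<dots>, e\<^sub>r, e\<^sub>-\<^sub>r, \<dots>, e\<^sub>-\<^sub>1\<close>, with the negative half read as
  \<open>k \<mapsto> v (-k)\<close>: \<open>levi r p q\<close> is the Levi element \<open>diag(1 + p q\<^sup>t, 1 - q p\<^sup>t)\<close>, orthogonal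
  when \<open>q\<^sup>t p = 0\<close>; \<open>siegel r S\<close> is the unipotent element \<open>v\<^sub>- \<mapsto> v\<^sub>- + S v\<^sub>+\<close>, orthogonal
  when \<open>S\<close> is alternating; \<open>odd_root r \<xi>\<close> is, up to a Siegel factor, the product of the
  \<open>T\<^sub>-\<^sub>j\<^sub>,\<^sub>0(\<xi>\<^sub>j)\<close>.\<close>

definition levi :: "nat \<Rightarrow> 'a::comm_ring_1 vec \<Rightarrow> 'a vec \<Rightarrow> 'a vec \<Rightarrow> 'a vec" where
  "levi r p q v k = (if 1 \<le> k \<and> k \<le> int r then v k + p k * dot_pos r q v
      else if - int r \<le> k \<and> k \<le> -1 then v k - q (-k) * dot_neg r p v else v k)"

definition siegel :: "nat \<Rightarrow> 'a::comm_ring_1 mat \<Rightarrow> 'a vec \<Rightarrow> 'a vec" where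
  "siegel r S v k = (if - int r \<le> k \<and> k \<le> -1 then v k + (\<Sum>j\<in>{1..int r}. S (-k) j * v j) else v k)"

definition odd_root :: "nat \<Rightarrow> 'a::comm_ring_1 vec \<Rightarrow> 'a vec \<Rightarrow> 'a vec" where
  "odd_root r \<xi> v k = (if k = 0 then v 0 - dot_pos r \<xi> v
      else if - int r \<le> k \<and> k \<le> -1 then v k + 2 * \<xi> (-k) * v 0 - \<xi> (-k) * dot_pos r \<xi> v
      else v k)"


definition alternating :: "nat \<Rightarrow> 'a::comm_ring_1 mat \<Rightarrow> bool" where
  "alternating r S \<longleftrightarrow>
     (\<forall>a b. 1 \<le> a \<and> a \<le> int r \<and> 1 \<le> b \<and> b \<le> int r \<longrightarrow> S a b = - S b a) \<and> (\<forall>a. S a a = 0)"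

lemma dot_pos_levi [simp]: "dot_pos r x (levi r p q v) = dot_pos r x v + dot_pos r x p * dot_pos r q v"
proof -
  have "dot_pos r x (levi r p q v) = (\<Sum>j\<in>{1..int r}. x j * v j + x j * p j * dot_pos r q v)"
    unfolding dot_pos_def[of r x] by (rule sum.cong) (auto simp: levi_def algebra_simps)
  then show ?thesis by (simp add: dot_pos_def[of r x] sum.distrib sum_distrib_right)
qed

lemma dot_neg_levi [simp]: "dot_neg r x (levi r p q v) = dot_neg r x v - dot_pos r x q * dot_neg r p v"
proof -
  have "dot_neg r x (levi r p q v) = (\<Sum>j\<in>{1..int r}. x j * v (-j) - x j * q j * dot_neg r p v)"
    unfolding dot_neg_def[of r x] by (rule sum.cong) (auto simp: levi_def algebra_simps)
  then show ?thesis by (simp add: dot_neg_def[of r x] dot_pos_def[of r x] sum_subtractf sum_distrib_right)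
qed

lemma dot_pos_siegel [simp]: "dot_pos r x (siegel r S v) = dot_pos r x v"
  unfolding dot_pos_def by (rule sum.cong) (auto simp: siegel_def)

lemma dot_pos_odd_root [simp]: "dot_pos r x (odd_root r \<xi> v) = dot_pos r x v"
  unfolding dot_pos_def by (rule sum.cong) (auto simp: odd_root_def)

lemma levi_zero_left: "levi r (\<lambda>k. 0) q v = v"
  by (simp add: fun_eq_iff levi_def dot_neg_def)

lemma levi_zero_right: "levi r p (\<lambda>k. 0) v = v"
  by (simp add: fun_eq_iff levi_def dot_pos_def)

lemma levi_scale: "levi r (\<lambda>k. c * p k) q v = levi r p (\<lambda>k. c * q k) v"
  by (auto simp: fun_eq_iff levi_def algebra_simps)

lemma levi_cong:
  assumes "\<And>k. 1 \<le> k \<Longrightarrow> k \<le> int r \<Longrightarrow> p k = p' k"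
    and "\<And>k. 1 \<le> k \<Longrightarrow> k \<le> int r \<Longrightarrow> q k = q' k"
  shows "levi r p q v = levi r p' q' v"
proof -
  have "dot_pos r q v = dot_pos r q' v" "dot_neg r p v = dot_neg r p' v"
    using assms by (auto intro: dot_pos_cong_left dot_neg_cong_left)
  then show ?thesis using assms by (auto simp: fun_eq_iff levi_def)
qed

lemma levi_levi_left:
  assumes "dot_pos r q p = 0" "dot_pos r q p' = 0"
  shows "levi r p q (levi r p' q v) = levi r (\<lambda>k. p k + p' k) q v"
  using assms by (auto simp: fun_eq_iff levi_def algebra_simps dot_pos_commute[of r p q])

lemma levi_levi_right:
  assumes "dot_pos r q p = 0" "dot_pos r q' p = 0"
  shows "levi r p q (levi r p q' v) = levi r p (\<lambda>k. q k + q' k) v"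
  using assms by (auto simp: fun_eq_iff levi_def algebra_simps dot_pos_commute[of r p])

lemma levi_commutator:
  assumes l: "1 \<le> l" "l \<le> int r" and "p l = 0" "q l = 0" "dot_pos r q p = 0"
  shows "levi r p (unit_vec l) (levi r (unit_vec l) q
           (levi r (\<lambda>k. - p k) (unit_vec l) (levi r (unit_vec l) (\<lambda>k. - q k) v)))
       = levi r p q v"
proof -
  define v1 where "v1 = levi r (unit_vec l) (\<lambda>k. - q k) v"
  define v2 where "v2 = levi r (\<lambda>k. - p k) (unit_vec l) v1"
  define v3 where "v3 = levi r (unit_vec l) q v2"
  have pq: "dot_pos r p q = 0" using assms dot_pos_commute by metis
  have e1: "dot_pos r (unit_vec l) v1 = v l - dot_pos r q v" "dot_pos r q v1 = dot_pos r q v"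
     "dot_neg r p v1 = dot_neg r p v" "dot_neg r (unit_vec l) v1 = v (-l)"
    using assms pq by (simp_all add: v1_def unit_vec_def)
  have e2: "dot_pos r (unit_vec l) v2 = v l - dot_pos r q v" "dot_pos r q v2 = dot_pos r q v"
     "dot_neg r p v2 = dot_neg r p v" "dot_neg r (unit_vec l) v2 = v (-l) + dot_neg r p v"
    using assms pq e1 by (simp_all add: v2_def unit_vec_def)
  have e3: "dot_pos r (unit_vec l) v3 = v l" "dot_neg r p v3 = dot_neg r p v"
    using assms pq e2 by (simp_all add: v3_def unit_vec_def)
  show ?thesis
    unfolding v1_def[symmetric] v2_def[symmetric] v3_def[symmetric]
  proof (rule ext)
    fix k
    show "levi r p (unit_vec l) v3 k = levi r p q v k"
      by (simp only: levi_def e3, simp only: v3_def levi_def e2, simp only: v2_def levi_def e1,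
          simp only: v1_def levi_def) (use l pq in \<open>auto simp: unit_vec_def algebra_simps\<close>)
  qed
qed

text \<open>Each of the four factors has a unit vector as one of its two vectors, so it splits into
  elementary transvections.\<close>

lemma levi_as_commutator:
  assumes l: "1 \<le> l" "l \<le> int r" and pl: "p l = 0" and qp: "dot_pos r q p = 0"
    and q': "q' = (\<lambda>k. q k - q l * unit_vec l k)"
  shows "levi r (\<lambda>k. (1 + q l) * p k) (unit_vec l) (levi r (unit_vec l) q'
           (levi r (\<lambda>k. - p k) (unit_vec l) (levi r (unit_vec l) (\<lambda>k. - q' k) v)))
     = levi r p q v"
proof -
  have q'l: "q' l = 0" by (simp add: q' unit_vec_def)
  have q'p: "dot_pos r q' p = 0" using l pl qp by (simp add: q')
  have "levi r (\<lambda>k. (1 + q l) * p k) (unit_vec l) (levi r (unit_vec l) q'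
           (levi r (\<lambda>k. - p k) (unit_vec l) (levi r (unit_vec l) (\<lambda>k. - q' k) v)))
      = levi r (\<lambda>k. q l * p k) (unit_vec l) (levi r p (unit_vec l) (levi r (unit_vec l) q'
           (levi r (\<lambda>k. - p k) (unit_vec l) (levi r (unit_vec l) (\<lambda>k. - q' k) v))))"
    using l pl by (subst levi_levi_left) (simp_all add: algebra_simps)
  also have "\<dots> = levi r (\<lambda>k. q l * p k) (unit_vec l) (levi r p q' v)"
    by (simp only: levi_commutator[OF l pl q'l q'p])
  also have "\<dots> = levi r p (\<lambda>k. q l * unit_vec l k + q' k) v"
    using l pl q'p by (simp add: levi_scale levi_levi_right)
  also have "(\<lambda>k. q l * unit_vec l k + q' k) = q" by (simp add: fun_eq_iff q')
  finally show ?thesis .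
qed

lemma siegel_siegel: "siegel r S (siegel r S' v) = siegel r (\<lambda>a b. S a b + S' a b) v"
proof -
  have "(\<Sum>j\<in>{1..int r}. S a j * siegel r S' v j) = (\<Sum>j\<in>{1..int r}. S a j * v j)" for a
    by (rule sum.cong) (simp_all add: siegel_def)
  then show ?thesis by (auto simp: fun_eq_iff siegel_def algebra_simps sum.distrib)
qed

lemma siegel_cong:
  "(\<And>a b. 1 \<le> a \<Longrightarrow> a \<le> int r \<Longrightarrow> 1 \<le> b \<Longrightarrow> b \<le> int r \<Longrightarrow> S a b = S' a b) \<Longrightarrow>
    siegel r S v = siegel r S' v"
  unfolding siegel_def by (auto simp: fun_eq_iff intro!: sum.cong)

lemma odd_root_siegel: "odd_root r \<xi> (siegel r S v) = siegel r S (odd_root r \<xi> v)"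
proof -
  have "(\<Sum>j\<in>{1..int r}. S a j * odd_root r \<xi> v j) = (\<Sum>j\<in>{1..int r}. S a j * v j)" for a
    by (rule sum.cong) (simp_all add: odd_root_def)
  then show ?thesis by (auto simp: fun_eq_iff siegel_def odd_root_def algebra_simps)
qed

lemma odd_root_odd_root:
  "odd_root r \<xi> (odd_root r \<eta> v) =
     siegel r (\<lambda>a b. \<eta> a * \<xi> b - \<xi> a * \<eta> b) (odd_root r (\<lambda>k. \<xi> k + \<eta> k) v)"
proof -
  have h: "(\<Sum>j\<in>{1..int r}. (\<eta> a * \<xi> j - \<xi> a * \<eta> j) * odd_root r (\<lambda>k. \<xi> k + \<eta> k) v j)
     = \<eta> a * dot_pos r \<xi> v - \<xi> a * dot_pos r \<eta> v" for a
  proof -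
    have "(\<Sum>j\<in>{1..int r}. (\<eta> a * \<xi> j - \<xi> a * \<eta> j) * odd_root r (\<lambda>k. \<xi> k + \<eta> k) v j)
      = (\<Sum>j\<in>{1..int r}. \<eta> a * (\<xi> j * v j) - \<xi> a * (\<eta> j * v j))"
      by (rule sum.cong) (auto simp: odd_root_def algebra_simps)
    then show ?thesis by (simp add: dot_pos_def sum_subtractf sum_distrib_left)
  qed
  show ?thesis
    by (rule ext) (simp only: siegel_def h, auto simp: odd_root_def algebra_simps)
qed

lemma odd_root_cong:
  assumes "\<And>k. 1 \<le> k \<Longrightarrow> k \<le> int r \<Longrightarrow> \<xi> k = \<xi>' k"
  shows "odd_root r \<xi> v = odd_root r \<xi>' v"
proof -
  have "dot_pos r \<xi> v = dot_pos r \<xi>' v" using assms by (rule dot_pos_cong_left)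
  then show ?thesis using assms by (auto simp: fun_eq_iff odd_root_def)
qed

lemma alternating_diff:
  assumes A: "alternating r A" and B: "alternating r B"
  shows "alternating r (\<lambda>x y. A x y - B x y)"
  unfolding alternating_def
proof (intro conjI allI impI)
  fix x y :: int assume "1 \<le> x \<and> x \<le> int r \<and> 1 \<le> y \<and> y \<le> int r"
  then have "A x y = - A y x" "B x y = - B y x" using A B unfolding alternating_def by blast+
  then show "A x y - B x y = - (A y x - B y x)" by simp
next
  fix x :: int
  show "A x x - B x x = 0" using A B unfolding alternating_def by simp
qed

section \<open>Columns reachable by few elementary transvections\<close>

text \<open>\<open>mat_vec I\<close> only reads the coordinates in \<open>I\<close> and its value outside \<open>I\<close> is junk, so
  matrix actions are compared with the operators above on \<open>I\<close> only.\<close>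

definition agree_on :: "int set \<Rightarrow> 'a vec \<Rightarrow> 'a vec \<Rightarrow> bool" where
  "agree_on I u v \<longleftrightarrow> (\<forall>k\<in>I. u k = v k)"

definition apply_all :: "int set \<Rightarrow> 'a::comm_ring_1 mat list \<Rightarrow> 'a vec \<Rightarrow> 'a vec" where
  "apply_all I ts v = foldr (mat_vec I) ts v"

lemma agree_on_trans: "agree_on I u v \<Longrightarrow> agree_on I v w \<Longrightarrow> agree_on I u w"
  by (simp add: agree_on_def)

lemma mat_vec_agree_on: "agree_on I v v' \<Longrightarrow> mat_vec I M v = mat_vec I M v'"
  by (simp add: agree_on_def mat_vec_def fun_eq_iff)

lemma apply_all_agree_on: "agree_on I v v' \<Longrightarrow> agree_on I (apply_all I ts v) (apply_all I ts v')"
proof (induction ts)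
  case Nil
  then show ?case by (simp add: apply_all_def)
next
  case (Cons t ts)
  then have "mat_vec I t (apply_all I ts v) = mat_vec I t (apply_all I ts v')"
    by (intro mat_vec_agree_on) simp
  then show ?case by (simp add: apply_all_def agree_on_def)
qed

lemma mat_vec_mat_mult:
  assumes "finite I"
  shows "mat_vec I (mat_mult I M N) v = mat_vec I M (mat_vec I N v)"
proof
  fix i
  have "mat_vec I (mat_mult I M N) v i = (\<Sum>k\<in>I. \<Sum>l\<in>I. M i l * N l k * v k)"
    by (simp add: mat_vec_def mat_mult_def sum_distrib_right)
  also have "\<dots> = (\<Sum>l\<in>I. \<Sum>k\<in>I. M i l * N l k * v k)" by (rule sum.swap)
  also have "\<dots> = mat_vec I M (mat_vec I N v) i"
    by (simp add: mat_vec_def sum_distrib_left mult.assoc)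
  finally show "mat_vec I (mat_mult I M N) v i = mat_vec I M (mat_vec I N v) i" .
qed

lemma mat_vec_idm: "finite I \<Longrightarrow> agree_on I (mat_vec I idm v) v"
  by (simp add: agree_on_def mat_vec_def idm_def if_distrib[of "\<lambda>x. x * _"] cong: if_cong)

lemma mat_vec_product:
  assumes "finite I"
  shows "agree_on I (mat_vec I (foldr (mat_mult I) ts idm) v) (apply_all I ts v)"
proof -
  have "mat_vec I (foldr (mat_mult I) ts idm) v = apply_all I ts (mat_vec I idm v)"
    using assms by (induction ts) (simp_all add: apply_all_def mat_vec_mat_mult)
  then show ?thesis using apply_all_agree_on[OF mat_vec_idm[OF assms]] by simp
qed

definition orth_index :: "nat \<Rightarrow> int set \<Rightarrow> bool" where
  "orth_index r I \<longleftrightarrow> finite I \<and> (\<forall>k. 1 \<le> k \<and> k \<le> int r \<longrightarrow> k \<in> I \<and> -k \<in> I)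
     \<and> (\<forall>k\<in>I. \<bar>k\<bar> \<le> int r)"

lemma orth_index_even: "orth_index r (idx_even r)"
proof -
  have "finite (idx_even r)" by (rule finite_subset[of _ "{-int r..int r}"]) (auto simp: idx_even_def)
  then show ?thesis by (auto simp: orth_index_def idx_even_def)
qed

lemma orth_index_odd: "orth_index r (idx_odd r)"
proof -
  have "finite (idx_odd r)" by (rule finite_subset[of _ "{-int r..int r}"]) (auto simp: idx_odd_def)
  then show ?thesis by (auto simp: orth_index_def idx_odd_def)
qed

definition realizable :: "int set \<Rightarrow> 'a::comm_ring_1 mat set \<Rightarrow> nat \<Rightarrow> ('a vec \<Rightarrow> 'a vec) \<Rightarrow> bool" where
  "realizable I gens N F \<longleftrightarrow>
     (\<exists>ts. length ts \<le> N \<and> set ts \<subseteq> gens \<and> (\<forall>v. agree_on I (apply_all I ts v) (F v)))"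

lemma realizable_id: "realizable I gens 0 (\<lambda>v. v)"
  unfolding realizable_def by (intro exI[of _ "[]"]) (simp add: apply_all_def agree_on_def)

lemma realizable_generator:
  "t \<in> gens \<Longrightarrow> (\<And>v. agree_on I (mat_vec I t v) (F v)) \<Longrightarrow> realizable I gens 1 F"
  unfolding realizable_def by (intro exI[of _ "[t]"]) (simp add: apply_all_def)

lemma realizable_comp:
  assumes "realizable I gens M F" "realizable I gens N G"
  shows "realizable I gens (M + N) (\<lambda>v. F (G v))"
proof -
  obtain ts us where ts: "length ts \<le> M" "set ts \<subseteq> gens" "\<And>v. agree_on I (apply_all I ts v) (F v)"
    and us: "length us \<le> N" "set us \<subseteq> gens" "\<And>v. agree_on I (apply_all I us v) (G v)"
    using assms unfolding realizable_def by blast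
  have "agree_on I (apply_all I (ts @ us) v) (F (G v))" for v
    using agree_on_trans[OF apply_all_agree_on[OF us(3)] ts(3)] by (simp add: apply_all_def)
  then show ?thesis unfolding realizable_def using ts us by (intro exI[of _ "ts @ us"]) auto
qed

lemma realizable_mono:
  "realizable I gens M F \<Longrightarrow> M \<le> N \<Longrightarrow> gens \<subseteq> gens' \<Longrightarrow> realizable I gens' N F"
  unfolding realizable_def by (meson order_trans)

lemma realizable_EO_le:
  assumes "finite I" "realizable I gens N F"
  shows "\<exists>g\<in>EO_le I gens N. \<forall>i\<in>I. F v i = mat_vec I g v i"
proof -
  obtain ts where "length ts \<le> N" "set ts \<subseteq> gens" "agree_on I (apply_all I ts v) (F v)"
    using assms(2) unfolding realizable_def by blast
  moreover have "agree_on I (mat_vec I (foldr (mat_mult I) ts idm) v) (apply_all I ts v)"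
    using mat_vec_product[OF assms(1)] .
  ultimately show ?thesis unfolding EO_le_def agree_on_def by force
qed

lemma mat_vec_transv:
  assumes "finite I" "j \<in> I" "-i \<in> I" "k \<in> I"
  shows "mat_vec I (transv i j \<xi>) v k
           = v k + (if k = i then \<xi> * v j else 0) - (if k = -j then \<xi> * v (-i) else 0)"
proof -
  have "mat_vec I (transv i j \<xi>) v k = (\<Sum>l\<in>I. (if l = k then v l else 0)
          + (if l = j then (if k = i then \<xi> * v l else 0) else 0)
          - (if l = -i then (if k = -j then \<xi> * v l else 0) else 0))"
    unfolding mat_vec_def transv_def by (rule sum.cong) (auto simp: idm_def unit_mat_def algebra_simps)
  then show ?thesis using assms by (simp add: sum.distrib sum_subtractf)
qed

lemma mat_vec_transv0:
  assumes "finite I" "0 \<in> I" "-i \<in> I" "k \<in> I"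
  shows "mat_vec I (transv0 i \<xi>) v k
           = v k + (if k = i then 2 * \<xi> * v 0 - \<xi>^2 * v (-i) else 0) - (if k = 0 then \<xi> * v (-i) else 0)"
proof -
  have "mat_vec I (transv0 i \<xi>) v k = (\<Sum>l\<in>I. (if l = k then v l else 0)
          + (if l = 0 then (if k = i then 2 * \<xi> * v l else 0) else 0)
          - (if l = -i then (if k = 0 then \<xi> * v l else 0) else 0)
          - (if l = -i then (if k = i then \<xi>^2 * v l else 0) else 0))"
    unfolding mat_vec_def transv0_def by (rule sum.cong) (auto simp: idm_def unit_mat_def algebra_simps)
  then show ?thesis using assms by (simp add: sum.distrib sum_subtractf)
qed

lemma transv_mem_EO_gens_even:
  "i \<in> idx_even r \<Longrightarrow> j \<in> idx_even r \<Longrightarrow> i \<noteq> j \<Longrightarrow> i \<noteq> - j \<Longrightarrow> transv i j \<xi> \<in> EO_gens_even r"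
  unfolding EO_gens_even_def by blast

lemma realizable_transv_levi:
  assumes I: "orth_index r I" and ij: "1 \<le> i" "i \<le> int r" "1 \<le> j" "j \<le> int r" "i \<noteq> j"
  shows "realizable I (EO_gens_even r) 1 (levi r (\<lambda>x. \<xi> * unit_vec i x) (unit_vec j))"
proof (rule realizable_generator)
  show "transv i j \<xi> \<in> EO_gens_even r"
    using ij by (intro transv_mem_EO_gens_even) (auto simp: idx_even_def)
  fix v
  have fin: "finite I" and mem: "j \<in> I" "-i \<in> I" and bd: "\<And>k. k \<in> I \<Longrightarrow> \<bar>k\<bar> \<le> int r"
    using I ij unfolding orth_index_def by auto
  show "agree_on I (mat_vec I (transv i j \<xi>) v) (levi r (\<lambda>x. \<xi> * unit_vec i x) (unit_vec j) v)"
    unfolding agree_on_def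
  proof
    fix k assume k: "k \<in> I"
    show "mat_vec I (transv i j \<xi>) v k = levi r (\<lambda>x. \<xi> * unit_vec i x) (unit_vec j) v k"
      unfolding mat_vec_transv[OF fin mem k] levi_def dot_neg_scale_left dot_neg_unit_vec_left[OF ij(1,2)]
        dot_pos_unit_vec_left[OF ij(3,4)]
      using bd[OF k] ij by (auto simp: unit_vec_def)
  qed
qed

lemma realizable_transv_siegel:
  assumes I: "orth_index r I" and ij: "1 \<le> i" "i \<le> int r" "1 \<le> j" "j \<le> int r" "i \<noteq> j"
  shows "realizable I (EO_gens_even r) 1
           (siegel r (\<lambda>a b. \<xi> * (unit_vec i a * unit_vec j b - unit_vec j a * unit_vec i b)))"
proof (rule realizable_generator)
  show "transv (-i) j \<xi> \<in> EO_gens_even r"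
    using ij by (intro transv_mem_EO_gens_even) (auto simp: idx_even_def)
  fix v
  have fin: "finite I" and mem: "j \<in> I" "-(-i) \<in> I" and bd: "\<And>k. k \<in> I \<Longrightarrow> \<bar>k\<bar> \<le> int r"
    using I ij unfolding orth_index_def by auto
  have row: "(\<Sum>x\<in>{1..int r}. \<xi> * (unit_vec i a * unit_vec j x - unit_vec j a * unit_vec i x) * v x)
      = \<xi> * (unit_vec i a * v j - unit_vec j a * v i)" for a
  proof -
    have "(\<Sum>x\<in>{1..int r}. \<xi> * (unit_vec i a * unit_vec j x - unit_vec j a * unit_vec i x) * v x)
       = (\<Sum>x\<in>{1..int r}. (if x = j then \<xi> * unit_vec i a * v x else 0)
           - (if x = i then \<xi> * unit_vec j a * v x else 0))"
      by (rule sum.cong) (auto simp: unit_vec_def)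
    then show ?thesis using ij by (simp add: sum_subtractf algebra_simps)
  qed
  show "agree_on I (mat_vec I (transv (-i) j \<xi>) v)
          (siegel r (\<lambda>a b. \<xi> * (unit_vec i a * unit_vec j b - unit_vec j a * unit_vec i b)) v)"
    unfolding agree_on_def
  proof
    fix k assume k: "k \<in> I"
    show "mat_vec I (transv (-i) j \<xi>) v k
        = siegel r (\<lambda>a b. \<xi> * (unit_vec i a * unit_vec j b - unit_vec j a * unit_vec i b)) v k"
      unfolding mat_vec_transv[OF fin mem k] siegel_def row using bd[OF k] ij by (auto simp: unit_vec_def)
  qed
qed

lemma realizable_transv0_odd_root:
  assumes I: "orth_index r I" and "0 \<in> I" and j: "1 \<le> j" "j \<le> int r"
  shows "realizable I (EO_gens_odd r) 1 (odd_root r (\<lambda>x. \<xi> * unit_vec j x))"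
proof (rule realizable_generator)
  show "transv0 (-j) \<xi> \<in> EO_gens_odd r"
    using j unfolding EO_gens_odd_def by (auto simp: idx_even_def)
  fix v
  have fin: "finite I" and mem: "-(-j) \<in> I" and bd: "\<And>k. k \<in> I \<Longrightarrow> \<bar>k\<bar> \<le> int r"
    using I j unfolding orth_index_def by auto
  show "agree_on I (mat_vec I (transv0 (-j) \<xi>) v) (odd_root r (\<lambda>x. \<xi> * unit_vec j x) v)"
    unfolding agree_on_def
  proof
    fix k assume k: "k \<in> I"
    show "mat_vec I (transv0 (-j) \<xi>) v k = odd_root r (\<lambda>x. \<xi> * unit_vec j x) v k"
      unfolding mat_vec_transv0[OF fin \<open>0 \<in> I\<close> mem k] odd_root_def dot_pos_scale_left
        dot_pos_unit_vec_left[OF j]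
      using bd[OF k] j
      by (auto simp: unit_vec_def power2_eq_square algebra_simps)
  qed
qed

lemma realizable_levi_column:
  assumes I: "orth_index r I" and l: "1 \<le> l" "l \<le> int r"
    and ks: "distinct ks" "\<forall>k\<in>set ks. 1 \<le> k \<and> k \<le> int r \<and> k \<noteq> l"
    and p: "\<And>k. 1 \<le> k \<Longrightarrow> k \<le> int r \<Longrightarrow> k \<notin> set ks \<Longrightarrow> p k = 0"
  shows "realizable I (EO_gens_even r) (length ks) (levi r p (unit_vec l))"
proof -
  have "realizable I (EO_gens_even r) (length ks)
          (levi r (\<lambda>k. if k \<in> set ks then p k else 0) (unit_vec l))"
    using ks
  proof (induction ks)
    case Nil
    then show ?case using realizable_id by (simp add: levi_zero_left)
  next
    case (Cons k ks)
    have k: "1 \<le> k" "k \<le> int r" "k \<noteq> l" "k \<notin> set ks" using Cons.prems by auto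
    have l_ks: "l \<notin> set ks" using Cons.prems by auto
    have IH: "realizable I (EO_gens_even r) (length ks)
        (levi r (\<lambda>x. if x \<in> set ks then p x else 0) (unit_vec l))"
      using Cons by auto
    have "realizable I (EO_gens_even r) (1 + length ks) (\<lambda>v. levi r (\<lambda>x. p k * unit_vec k x) (unit_vec l)
            (levi r (\<lambda>x. if x \<in> set ks then p x else 0) (unit_vec l) v))"
      by (rule realizable_comp[OF realizable_transv_levi[OF I k(1,2) l k(3), where \<xi> = "p k"] IH])
    moreover have "levi r (\<lambda>x. p k * unit_vec k x) (unit_vec l)
            (levi r (\<lambda>x. if x \<in> set ks then p x else 0) (unit_vec l) v)
        = levi r (\<lambda>x. p k * unit_vec k x + (if x \<in> set ks then p x else 0)) (unit_vec l) v" for v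
      using l k l_ks by (intro levi_levi_left) (simp_all, simp_all add: unit_vec_def)
    moreover have "(\<lambda>x. p k * unit_vec k x + (if x \<in> set ks then p x else 0))
        = (\<lambda>x. if x \<in> set (k # ks) then p x else 0)"
      using k by (auto simp: unit_vec_def)
    ultimately show ?case by simp
  qed
  moreover have "levi r (\<lambda>k. if k \<in> set ks then p k else 0) (unit_vec l) = levi r p (unit_vec l)"
    using p by (intro ext levi_cong) auto
  ultimately show ?thesis by simp
qed

lemma realizable_levi_row:
  assumes I: "orth_index r I" and l: "1 \<le> l" "l \<le> int r"
    and ks: "distinct ks" "\<forall>k\<in>set ks. 1 \<le> k \<and> k \<le> int r \<and> k \<noteq> l"
    and q: "\<And>k. 1 \<le> k \<Longrightarrow> k \<le> int r \<Longrightarrow> k \<notin> set ks \<Longrightarrow> q k = 0"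
  shows "realizable I (EO_gens_even r) (length ks) (levi r (unit_vec l) q)"
proof -
  have "realizable I (EO_gens_even r) (length ks)
          (levi r (unit_vec l) (\<lambda>k. if k \<in> set ks then q k else 0))"
    using ks
  proof (induction ks)
    case Nil
    then show ?case using realizable_id by (simp add: levi_zero_right)
  next
    case (Cons k ks)
    have k: "1 \<le> k" "k \<le> int r" "k \<noteq> l" "k \<notin> set ks" using Cons.prems by auto
    have l_ks: "l \<notin> set ks" using Cons.prems by auto
    have IH: "realizable I (EO_gens_even r) (length ks)
        (levi r (unit_vec l) (\<lambda>x. if x \<in> set ks then q x else 0))"
      using Cons by auto
    have "realizable I (EO_gens_even r) (1 + length ks) (\<lambda>v. levi r (\<lambda>x. q k * unit_vec l x) (unit_vec k)
            (levi r (unit_vec l) (\<lambda>x. if x \<in> set ks then q x else 0) v))"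
      by (rule realizable_comp[OF realizable_transv_levi[OF I l k(1,2) k(3)[symmetric], where \<xi> = "q k"] IH])
    moreover have "levi r (\<lambda>x. q k * unit_vec l x) (unit_vec k)
            (levi r (unit_vec l) (\<lambda>x. if x \<in> set ks then q x else 0) v)
        = levi r (unit_vec l) (\<lambda>x. q k * unit_vec k x + (if x \<in> set ks then q x else 0)) v" for v
      unfolding levi_scale using l k l_ks
      by (intro levi_levi_right) (simp_all, simp_all add: unit_vec_def)
    moreover have "(\<lambda>x. q k * unit_vec k x + (if x \<in> set ks then q x else 0))
        = (\<lambda>x. if x \<in> set (k # ks) then q x else 0)"
      using k by (auto simp: unit_vec_def)
    ultimately show ?case by simp
  qed
  moreover have "levi r (unit_vec l) (\<lambda>k. if k \<in> set ks then q k else 0) = levi r (unit_vec l) q"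
    using q by (intro ext levi_cong) auto
  ultimately show ?thesis by simp
qed

lemma realizable_levi:
  assumes I: "orth_index r I" and l: "1 \<le> l" "l \<le> int r"
    and ks: "distinct ks" "\<forall>k\<in>set ks. 1 \<le> k \<and> k \<le> int r \<and> k \<noteq> l"
    and p: "\<And>k. 1 \<le> k \<Longrightarrow> k \<le> int r \<Longrightarrow> k \<notin> set ks \<Longrightarrow> p k = 0"
    and qp: "dot_pos r q p = 0"
  shows "realizable I (EO_gens_even r) (2 * length ks + 2 * (r - 1)) (levi r p q)"
proof -
  define q' where "q' = (\<lambda>k. q k - q l * unit_vec l k)"
  define js where "js = [1..l - 1] @ [l + 1..int r]"
  have js: "distinct js" "\<forall>k\<in>set js. 1 \<le> k \<and> k \<le> int r \<and> k \<noteq> l" "length js = r - 1"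
    using l by (auto simp: js_def)
  have q': "q' k = 0" "- q' k = 0" if "1 \<le> k" "k \<le> int r" "k \<notin> set js" for k
  proof -
    have "k = l" using that by (auto simp: js_def)
    then show "q' k = 0" "- q' k = 0" by (simp_all add: q'_def unit_vec_def)
  qed
  have col: "realizable I (EO_gens_even r) (length ks) (levi r (\<lambda>k. c * p k) (unit_vec l))" for c
    using p by (intro realizable_levi_column[OF I l ks]) auto
  have row: "realizable I (EO_gens_even r) (length js) (levi r (unit_vec l) q')"
    "realizable I (EO_gens_even r) (length js) (levi r (unit_vec l) (\<lambda>k. - q' k))"
    using q' by (intro realizable_levi_row[OF I l js(1,2)]; auto)+
  have "realizable I (EO_gens_even r) (length ks + (length js + (length ks + length js)))
     (\<lambda>v. levi r (\<lambda>k. (1 + q l) * p k) (unit_vec l) (levi r (unit_vec l) q'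
            (levi r (\<lambda>k. - 1 * p k) (unit_vec l) (levi r (unit_vec l) (\<lambda>k. - q' k) v))))"
    by (rule realizable_comp[OF col realizable_comp[OF row(1) realizable_comp[OF col row(2)]]])
  moreover have "p l = 0" using p l ks by auto
  then have "(\<lambda>v. levi r (\<lambda>k. (1 + q l) * p k) (unit_vec l) (levi r (unit_vec l) q'
            (levi r (\<lambda>k. - 1 * p k) (unit_vec l) (levi r (unit_vec l) (\<lambda>k. - q' k) v)))) = levi r p q"
    using levi_as_commutator[OF l _ qp q'_def] by (simp add: fun_eq_iff)
  moreover have "length ks + (length js + (length ks + length js)) = 2 * length ks + 2 * (r - 1)"
    using js(3) by simp
  ultimately show ?thesis by argo
qed

lemma realizable_siegel_pairs:
  assumes I: "orth_index r I"
    and ps: "\<forall>(i, j)\<in>set ps. 1 \<le> i \<and> i \<le> int r \<and> 1 \<le> j \<and> j \<le> int r \<and> i \<noteq> j"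
  shows "realizable I (EO_gens_even r) (length ps) (siegel r (\<lambda>a b. \<Sum>(i, j)\<leftarrow>ps.
           S i j * (unit_vec i a * unit_vec j b - unit_vec j a * unit_vec i b)))"
  using ps
proof (induction ps)
  case Nil
  have "siegel r (\<lambda>a b. 0 :: 'a) = (\<lambda>v. v)" by (simp add: fun_eq_iff siegel_def)
  then show ?case using realizable_id by simp
next
  case (Cons x ps)
  obtain i j where x: "x = (i, j)" by (cases x)
  have ij: "1 \<le> i" "i \<le> int r" "1 \<le> j" "j \<le> int r" "i \<noteq> j" using Cons.prems x by auto
  have IH: "realizable I (EO_gens_even r) (length ps) (siegel r (\<lambda>a b. \<Sum>(i, j)\<leftarrow>ps.
           S i j * (unit_vec i a * unit_vec j b - unit_vec j a * unit_vec i b)))"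
    using Cons by auto
  have "realizable I (EO_gens_even r) (1 + length ps) (\<lambda>v. siegel r
          (\<lambda>a b. S i j * (unit_vec i a * unit_vec j b - unit_vec j a * unit_vec i b))
          (siegel r (\<lambda>a b. \<Sum>(i, j)\<leftarrow>ps. S i j * (unit_vec i a * unit_vec j b - unit_vec j a * unit_vec i b)) v))"
    by (rule realizable_comp[OF realizable_transv_siegel[OF I ij, where \<xi> = "S i j"] IH])
  then show ?case by (simp add: x siegel_siegel)
qed

definition upper_pairs :: "nat \<Rightarrow> (int \<times> int) list" where
  "upper_pairs r = concat (map (\<lambda>j. map (\<lambda>i. (i, j)) [1..j - 1]) [1..int r])"

lemma upper_pairs_bounds: "(i, j) \<in> set (upper_pairs r) \<Longrightarrow> 1 \<le> i \<and> i < j \<and> j \<le> int r"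
  by (auto simp: upper_pairs_def)

lemma length_upper_pairs: "length (upper_pairs r) = r * (r - 1) div 2"
proof -
  have "2 * length (upper_pairs r) = r * (r - 1)"
  proof (induction r)
    case 0
    then show ?case by (simp add: upper_pairs_def)
  next
    case (Suc r)
    have "upper_pairs (Suc r) = upper_pairs r @ map (\<lambda>i. (i, int r + 1)) [1..int r]"
      by (simp add: upper_pairs_def upto_rec2 add.commute)
    then show ?case using Suc by (cases r) (simp_all add: algebra_simps)
  qed
  then show ?thesis by simp
qed

lemma sum_list_map_concat: "(\<Sum>x\<leftarrow>concat xss. f x) = (\<Sum>xs\<leftarrow>xss. \<Sum>x\<leftarrow>xs. f x)"
  by (induction xss) simp_all

lemma sum_unit_vec: "finite A \<Longrightarrow> (\<Sum>i\<in>A. unit_vec i a * f i) = (if a \<in> A then f a else 0)"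
  by (simp add: unit_vec_def if_distrib[of "\<lambda>x. x * _"] cong: if_cong)

lemma sum_upper_pairs:
  assumes ab: "1 \<le> a" "a \<le> int r" "1 \<le> b" "b \<le> int r"
  shows "(\<Sum>(i, j)\<leftarrow>upper_pairs r. S i j * (unit_vec i a * unit_vec j b - unit_vec j a * unit_vec i b))
       = (if a < b then S a b else 0) - (if b < a then S b a else 0)"
proof -
  have "(\<Sum>i\<in>{1..j - 1}. S i j * (unit_vec i a * unit_vec j b - unit_vec j a * unit_vec i b))
      = unit_vec j b * (if a < j then S a j else 0) - unit_vec j a * (if b < j then S b j else 0)" for j
  proof -
    have "(\<Sum>i\<in>{1..j - 1}. S i j * (unit_vec i a * unit_vec j b - unit_vec j a * unit_vec i b))
      = unit_vec j b * (\<Sum>i\<in>{1..j - 1}. unit_vec i a * S i j) - unit_vec j a * (\<Sum>i\<in>{1..j - 1}. unit_vec i b * S i j)"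
      by (simp add: sum_subtractf sum_distrib_left algebra_simps)
    then show ?thesis using ab by (simp add: sum_unit_vec)
  qed
  then show ?thesis
    unfolding upper_pairs_def sum_list_map_concat using ab
    by (simp add: o_def sum_list_distinct_conv_sum_set sum_subtractf sum_unit_vec)
qed

lemma realizable_siegel:
  assumes I: "orth_index r I" and S: "alternating r S"
  shows "realizable I (EO_gens_even r) (r * (r - 1) div 2) (siegel r S)"
proof -
  have "realizable I (EO_gens_even r) (length (upper_pairs r)) (siegel r (\<lambda>a b. \<Sum>(i, j)\<leftarrow>upper_pairs r.
           S i j * (unit_vec i a * unit_vec j b - unit_vec j a * unit_vec i b)))"
    by (rule realizable_siegel_pairs[OF I]) (auto dest: upper_pairs_bounds)
  moreover have "(\<Sum>(i, j)\<leftarrow>upper_pairs r.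
           S i j * (unit_vec i a * unit_vec j b - unit_vec j a * unit_vec i b)) = S a b"
    if ab: "1 \<le> a" "a \<le> int r" "1 \<le> b" "b \<le> int r" for a b
  proof -
    have "S a b = - S b a" "S a a = 0" using S ab unfolding alternating_def by blast+
    then show ?thesis unfolding sum_upper_pairs[OF ab] by (cases a b rule: linorder_cases) auto
  qed
  then have "siegel r (\<lambda>a b. \<Sum>(i, j)\<leftarrow>upper_pairs r.
           S i j * (unit_vec i a * unit_vec j b - unit_vec j a * unit_vec i b)) = siegel r S"
    by (intro ext siegel_cong)
  ultimately show ?thesis by (simp add: length_upper_pairs)
qed

lemma alternating_add:
  assumes A: "alternating r A" and B: "alternating r B"
  shows "alternating r (\<lambda>x y. A x y + B x y)"
  unfolding alternating_def
proof (intro conjI allI impI)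
  fix x y :: int assume "1 \<le> x \<and> x \<le> int r \<and> 1 \<le> y \<and> y \<le> int r"
  then have "A x y = - A y x" "B x y = - B y x" using A B unfolding alternating_def by blast+
  then show "A x y + B x y = - (A y x + B y x)" by simp
next
  fix x :: int
  show "A x x + B x x = 0" using A B unfolding alternating_def by simp
qed

lemma alternating_wedge: "alternating r (\<lambda>a b. x a * y b - y a * x b)"
  by (simp add: alternating_def algebra_simps)

lemma realizable_odd_roots:
  assumes I: "orth_index r I" "0 \<in> I"
    and js: "distinct js" "\<forall>j\<in>set js. 1 \<le> j \<and> j \<le> int r"
  shows "\<exists>S. alternating r S \<and> realizable I (EO_gens_odd r) (length js)
           (\<lambda>v. siegel r S (odd_root r (\<lambda>k. if k \<in> set js then \<xi> k else 0) v))"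
  using js
proof (induction js)
  case Nil
  have "siegel r (\<lambda>a b. 0) (odd_root r (\<lambda>k. 0) v) = v" for v :: "'a vec"
    by (simp add: fun_eq_iff siegel_def odd_root_def dot_pos_def)
  then show ?case using realizable_id by (intro exI[of _ "\<lambda>a b. 0"]) (simp add: alternating_def)
next
  case (Cons j js)
  define \<eta> where "\<eta> = (\<lambda>k. if k \<in> set js then \<xi> k else 0)"
  define \<zeta> where "\<zeta> = (\<lambda>k. \<xi> j * unit_vec j k)"
  have j: "1 \<le> j" "j \<le> int r" "j \<notin> set js" using Cons.prems by auto
  obtain S where S: "alternating r S"
    and IH: "realizable I (EO_gens_odd r) (length js) (\<lambda>v. siegel r S (odd_root r \<eta> v))"
    using Cons unfolding \<eta>_def by auto
  have "realizable I (EO_gens_odd r) (1 + length js) (\<lambda>v. odd_root r \<zeta> (siegel r S (odd_root r \<eta> v)))"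
    unfolding \<zeta>_def by (rule realizable_comp[OF realizable_transv0_odd_root[OF I j(1,2)] IH])
  moreover have "odd_root r \<zeta> (siegel r S (odd_root r \<eta> v))
      = siegel r (\<lambda>a b. S a b + (\<eta> a * \<zeta> b - \<zeta> a * \<eta> b)) (odd_root r (\<lambda>k. \<zeta> k + \<eta> k) v)" for v
    by (simp add: odd_root_siegel odd_root_odd_root siegel_siegel)
  moreover have "(\<lambda>k. \<zeta> k + \<eta> k) = (\<lambda>k. if k \<in> set (j # js) then \<xi> k else 0)"
    using j by (auto simp: \<zeta>_def \<eta>_def unit_vec_def)
  moreover have "alternating r (\<lambda>a b. S a b + (\<eta> a * \<zeta> b - \<zeta> a * \<eta> b))"
    by (rule alternating_add[OF S alternating_wedge])
  ultimately show ?case by auto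
qed

lemma realizable_siegel_odd_root:
  assumes I: "orth_index r I" "0 \<in> I" and S: "alternating r S"
    and js: "distinct js" "\<forall>j\<in>set js. 1 \<le> j \<and> j \<le> int r"
    and \<xi>: "\<And>k. 1 \<le> k \<Longrightarrow> k \<le> int r \<Longrightarrow> k \<notin> set js \<Longrightarrow> \<xi> k = 0"
  shows "realizable I (EO_gens_odd r) (r * (r - 1) div 2 + length js) (\<lambda>v. siegel r S (odd_root r \<xi> v))"
proof -
  obtain S' where S': "alternating r S'" and roots: "realizable I (EO_gens_odd r) (length js)
      (\<lambda>v. siegel r S' (odd_root r (\<lambda>k. if k \<in> set js then \<xi> k else 0) v))"
    using realizable_odd_roots[OF I js] by blast
  have "realizable I (EO_gens_odd r) (r * (r - 1) div 2) (siegel r (\<lambda>a b. S a b - S' a b))"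
    using realizable_siegel[OF I(1) alternating_diff[OF S S']]
    by (rule realizable_mono) (auto simp: EO_gens_odd_def)
  from realizable_comp[OF this roots] show ?thesis
    using \<xi> by (simp add: siegel_siegel odd_root_cong[of r "\<lambda>k. if k \<in> set js then \<xi> k else 0" \<xi>])
qed

section \<open>The explicit deformation\<close>

text \<open>Here \<open>b\<close> is a column with \<open>\<langle>a, b\<^sub>+\<rangle> = s\<close>, where \<open>a\<close> vanishes at \<open>r\<close>;
  \<open>b + s\<^sup>3z w\<close> and \<open>a + s\<^sup>3z a'\<close> are deformations still pairing to \<open>s\<close>, and \<open>e\<^sub>0\<close> is the
  defect of isotropy of the deformed column away from the index \<open>0\<close>.
  The deformed column is reached from \<open>b\<close> by the Siegel element with matrix \<open>D a\<^sup>t - a D\<^sup>t\<close>,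
  which adds \<open>s D\<close> to the negative half because \<open>\<langle>D, b\<^sub>+\<rangle> = 0\<close>, followed by the Levi element
  \<open>levi r p U\<close> with \<open>\<langle>U, b\<^sub>+\<rangle> = s\<close>, which adds \<open>s p\<close> to the positive half, and a last Levi
  element repairing the coordinate \<open>r\<close>.\<close>

locale column_deformation =
  fixes r :: nat and s z e\<^sub>0 :: "'a::comm_ring_1" and b w a a' :: "'a vec"
  assumes r_ge_3: "r \<ge> 3"
    and a_last: "a (int r) = 0" and a'_last: "a' (int r) = 0"
    and pairing: "dot_pos r a b = s"
    and pairing_deformed: "dot_pos r a' b + dot_pos r a w + s^3 * z * dot_pos r a' w = 0"
    and isotropy_defect: "s * (dot_neg r b w + dot_neg r w b + s^3 * z * dot_neg r w w) + e\<^sub>0 = 0"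
begin

abbreviation "R \<equiv> int r"

definition "z1 = s * z"
definition "z2 = s^2 * z"
definition "z3 = s^3 * z"
definition "deformed = (\<lambda>k. b k + z3 * w k)"
definition "aw = dot_pos r a w"
definition "kap = (\<lambda>k. w R * (a k + z3 * a' k) - (1 - b R) * a' k)"
definition "nu = (\<lambda>k. z2 * kap k)"
definition "U = (\<lambda>k. (1 - b R) * a k + s * unit_vec R k)"
definition "ph = (\<lambda>k. s * (w k - w R * unit_vec R k) - ((1 - b R) * aw) * unit_vec R k)"
definition "p = (\<lambda>k. z1 * ph k)"
definition "cn = (\<lambda>k. deformed (-k) + deformed (-R) * nu k)"
definition "gam = (\<lambda>k. s * w (-k) + deformed (-R) * kap k)"
definition "D = (\<lambda>k. z * (s * gam k + U k * dot_pos r ph cn + e\<^sub>0 * a k))"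
definition "S = (\<lambda>i j. D i * a j - a i * D j)"

lemma R_bounds: "1 \<le> R" "2 < R" using r_ge_3 by auto

lemma kap_last: "kap R = 0" by (simp add: kap_def a_last a'_last)
lemma nu_last: "nu R = 0" by (simp add: nu_def kap_last)
lemma U_last: "U R = s" by (simp add: U_def a_last unit_vec_def)

lemma pairing_deformed': "dot_pos r a' b + z3 * dot_pos r a' w = - aw"
  using pairing_deformed unfolding z3_def aw_def by (simp add: algebra_simps eq_neg_iff_add_eq_0)

lemma dot_pos_kap_left: "dot_pos r kap x = w R * (dot_pos r a x + z3 * dot_pos r a' x) - (1 - b R) * dot_pos r a' x"
  by (simp add: kap_def)

lemma dot_pos_kap_right: "dot_pos r x kap = w R * (dot_pos r x a + z3 * dot_pos r x a') - (1 - b R) * dot_pos r x a'"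
  by (simp add: kap_def)

lemma dot_pos_U_b: "dot_pos r U b = s"
  using R_bounds by (simp add: U_def pairing algebra_simps)

lemma dot_pos_U_p: "dot_pos r U p = 0"
proof -
  have "dot_pos r U ph = 0"
    using R_bounds by (simp add: U_def ph_def a_last aw_def dot_pos_commute[of r a w])
      (simp add: unit_vec_def algebra_simps)
  then show ?thesis by (simp add: p_def)
qed

lemma dot_pos_nu_deformed: "dot_pos r nu deformed = z3 * w R + (1 - b R) * z2 * aw"
proof -
  have "dot_pos r nu deformed = z2 * (w R * (dot_pos r a b + z3 * (dot_pos r a' b + aw + z3 * dot_pos r a' w))
          - (1 - b R) * (dot_pos r a' b + z3 * dot_pos r a' w))"
    by (simp add: nu_def deformed_def dot_pos_kap_left aw_def) (simp add: algebra_simps)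
  also have "\<dots> = z2 * (w R * s + (1 - b R) * aw)"
    using pairing_deformed' pairing by (simp add: algebra_simps)
  finally show ?thesis by (simp add: z2_def z3_def algebra_simps power3_eq_cube power2_eq_square)
qed

lemma gam_ph_identity:
  "dot_pos r gam b + dot_pos r ph cn = s * (dot_neg r b w + dot_neg r w b + z3 * dot_neg r w w)"
proof -
  have cn_last: "cn R = deformed (-R)" by (simp add: cn_def nu_last)
  have g: "dot_pos r gam b = s * dot_neg r b w
      + deformed (-R) * (w R * (s + z3 * dot_pos r a' b) - (1 - b R) * dot_pos r a' b)"
    using pairing by (simp add: gam_def dot_pos_kap_left dot_pos_reflect[of r "\<lambda>k. s * w k", simplified])
  have w_cn: "dot_pos r w cn = dot_neg r w b + z3 * dot_neg r w w
      + deformed (-R) * (z2 * (w R * (aw + z3 * dot_pos r a' w) - (1 - b R) * dot_pos r a' w))"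
  proof -
    have "dot_pos r w (\<lambda>k. deformed (-k)) = dot_neg r w deformed"
      by (simp add: dot_pos_commute[of r w] dot_pos_reflect)
    then show ?thesis
      by (simp add: cn_def nu_def dot_pos_kap_right deformed_def aw_def dot_pos_commute[of r w])
  qed
  have ph_cn: "dot_pos r ph cn = s * (dot_pos r w cn - w R * deformed (-R)) - (1 - b R) * aw * deformed (-R)"
    using R_bounds by (simp add: ph_def cn_last)
  have "dot_pos r gam b + dot_pos r ph cn - s * (dot_neg r b w + dot_neg r w b + z3 * dot_neg r w w)
     = deformed (-R) * (w R * (s + z3 * (dot_pos r a' b + aw + z3 * dot_pos r a' w))
          - (1 - b R) * (dot_pos r a' b + z3 * dot_pos r a' w) - s * w R - (1 - b R) * aw)
       + (s * z2 - z3) * deformed (-R) * (w R * (aw + z3 * dot_pos r a' w) - (1 - b R) * dot_pos r a' w)"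
    unfolding g ph_cn w_cn by (simp add: algebra_simps)
  also have "\<dots> = 0"
    using pairing_deformed' by (simp add: z2_def z3_def algebra_simps power3_eq_cube power2_eq_square)
  finally show ?thesis by simp
qed

lemma dot_pos_D_b: "dot_pos r D b = 0"
proof -
  have "dot_pos r D b = z * (s * dot_pos r gam b + dot_pos r U b * dot_pos r ph cn + e\<^sub>0 * dot_pos r a b)"
    by (simp add: D_def algebra_simps)
  also have "\<dots> = z * s * (dot_pos r gam b + dot_pos r ph cn + e\<^sub>0)"
    by (simp add: dot_pos_U_b pairing algebra_simps)
  also have "\<dots> = 0"
    using isotropy_defect by (simp add: gam_ph_identity z3_def)
  finally show ?thesis .
qed

context
  fixes v :: "'a vec"
  assumes v_pos: "\<And>k. 1 \<le> k \<Longrightarrow> k \<le> R \<Longrightarrow> v k = b k"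
    and v_neg: "\<And>k. 1 \<le> k \<Longrightarrow> k \<le> R \<Longrightarrow> v (-k) = b (-k) - s * z * e\<^sub>0 * a k"
begin

lemma siegel_stage:
  "1 \<le> k \<Longrightarrow> k \<le> R \<Longrightarrow> siegel r S v k = b k"
  "1 \<le> k \<Longrightarrow> k \<le> R \<Longrightarrow> siegel r S v (-k) = cn k + U k * dot_pos r p cn"
proof -
  assume k: "1 \<le> k" "k \<le> R"
  show "siegel r S v k = b k" using k by (simp add: siegel_def v_pos)
  have "dot_pos r x v = dot_pos r x b" for x by (rule dot_pos_cong_right) (simp add: v_pos)
  moreover have "(\<Sum>j\<in>{1..R}. S k j * v j) = D k * dot_pos r a v - a k * dot_pos r D v"
    by (simp add: dot_pos_def S_def left_diff_distrib sum_subtractf sum_distrib_left mult.assoc)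
  ultimately have "(\<Sum>j\<in>{1..R}. S k j * v j) = s * D k"
    using dot_pos_D_b pairing by (simp add: mult.commute)
  then have "siegel r S v (-k) = b (-k) - s * z * e\<^sub>0 * a k + s * D k"
    using k by (simp add: siegel_def v_neg)
  also have "\<dots> = cn k + U k * dot_pos r p cn"
    by (simp add: D_def cn_def gam_def nu_def deformed_def p_def z1_def z2_def z3_def)
      (simp add: algebra_simps power3_eq_cube power2_eq_square)
  finally show "siegel r S v (-k) = cn k + U k * dot_pos r p cn" .
qed

lemma levi_stage:
  "1 \<le> k \<Longrightarrow> k \<le> R \<Longrightarrow> levi r p U (siegel r S v) k = b k + s * p k"
  "1 \<le> k \<Longrightarrow> k \<le> R \<Longrightarrow> levi r p U (siegel r S v) (-k) = cn k"
proof -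
  have "dot_pos r x (siegel r S v) = dot_pos r x b" for x
    by (simp add: siegel_stage cong: dot_pos_cong_right)
  moreover have "dot_neg r p (siegel r S v) = dot_pos r p cn"
  proof -
    have "dot_neg r p (siegel r S v) = dot_pos r p (\<lambda>j. cn j + U j * dot_pos r p cn)"
      unfolding dot_neg_def dot_pos_def[of r p "\<lambda>j. cn j + U j * dot_pos r p cn"]
      by (rule sum.cong) (simp_all add: siegel_stage)
    then show ?thesis using dot_pos_U_p by (simp add: dot_pos_commute[of r p U])
  qed
  moreover assume "1 \<le> k" "k \<le> R"
  ultimately show "levi r p U (siegel r S v) k = b k + s * p k"
    and "levi r p U (siegel r S v) (-k) = cn k"
    by (simp_all add: levi_def siegel_stage dot_pos_U_b)
qed

lemma deformation_stages:
  assumes "1 \<le> \<bar>k\<bar>" "\<bar>k\<bar> \<le> R"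
  shows "levi r (unit_vec R) nu (levi r p U (siegel r S v)) k = deformed k"
proof -
  define v' where "v' = levi r p U (siegel r S v)"
  have v'_pos: "v' j = b j + s * p j" and v'_neg: "v' (-j) = cn j" if "1 \<le> j" "j \<le> R" for j
    using that by (simp_all add: v'_def levi_stage)
  have nu_v': "dot_pos r nu v' = dot_pos r nu deformed"
  proof -
    have "dot_pos r nu v' = dot_pos r nu (\<lambda>k. b k + s * p k)"
      by (rule dot_pos_cong_right) (simp add: v'_pos)
    also have "\<dots> = dot_pos r nu deformed"
      using R_bounds by (simp add: deformed_def p_def ph_def nu_last z1_def z3_def)
        (simp add: algebra_simps power3_eq_cube)
    finally show ?thesis .
  qed
  consider "k = R" | "1 \<le> k" "k < R" | j where "k = -j" "1 \<le> j" "j \<le> R"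
    using assms by (cases "0 < k") (force, metis abs_of_nonpos add.inverse_inverse linorder_not_le)
  then show ?thesis
  proof cases
    case 1
    have p_last: "p R = - (z1 * (1 - b R) * aw)" using R_bounds by (simp add: p_def ph_def unit_vec_def)
    have "levi r (unit_vec R) nu v' R = b R + s * p R + dot_pos r nu deformed"
      using R_bounds by (simp add: levi_def v'_pos nu_v' unit_vec_def)
    also have "\<dots> = deformed R"
      unfolding dot_pos_nu_deformed p_last
      by (simp add: deformed_def z1_def z2_def algebra_simps power2_eq_square)
    finally show ?thesis using 1 by (simp add: v'_def)
  next
    case 2
    then show ?thesis unfolding v'_def[symmetric]
      by (simp add: levi_def v'_pos unit_vec_def p_def ph_def deformed_def z1_def z3_def)
        (simp add: algebra_simps power3_eq_cube)
  next
    case 3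
    have "cn R = deformed (-R)" by (simp add: cn_def nu_last)
    then show ?thesis
      using 3 R_bounds unfolding v'_def[symmetric] by (simp add: levi_def v'_neg cn_def)
  qed
qed

end

end

context column_deformation
begin

text \<open>\<open>levi_as_commutator\<close> needs a zero coordinate of \<open>p\<close>, so \<open>p\<close> is split into a part supported
  on \<open>{1, r}\<close>, orthogonal to \<open>U\<close> because \<open>U\<^sub>r = s\<close>, and a part vanishing at \<open>1\<close>.\<close>

definition "p1 = (\<lambda>k. z1 * w 1 * (s * unit_vec 1 k - U 1 * unit_vec R k))"
definition "p2 = (\<lambda>k. p k - p1 k)"

lemma S_alternating: "alternating r S"
  unfolding S_def by (rule alternating_wedge)

lemma realizable_levi_p_U:
  assumes I: "orth_index r I"
  shows "realizable I (EO_gens_even r) (6 * r - 2) (levi r p U)"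
proof -
  have U_p1: "dot_pos r U p1 = 0" using R_bounds by (simp add: p1_def U_last)
  have U_p2: "dot_pos r U p2 = 0" using U_p1 dot_pos_U_p by (simp add: p2_def)
  have p1_vanish: "p1 k = 0" if "k \<notin> set [1, R]" for k
    using that by (simp add: p1_def unit_vec_def)
  have p2_vanish: "p2 k = 0" if "1 \<le> k" "k \<le> R" "k \<notin> set [2..R]" for k
  proof -
    have "k = 1" using that by simp
    then show ?thesis using R_bounds by (simp add: p2_def p1_def p_def ph_def unit_vec_def)
  qed
  have "realizable I (EO_gens_even r) (2 * length [1, R] + 2 * (r - 1)) (levi r p1 U)"
    by (rule realizable_levi[where l = 2, OF I _ _ _ _ _ U_p1]) (use R_bounds p1_vanish in auto)
  moreover have "realizable I (EO_gens_even r) (2 * length [2..R] + 2 * (r - 1)) (levi r p2 U)"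
    by (rule realizable_levi[where l = 1, OF I _ _ _ _ _ U_p2]) (use R_bounds p2_vanish in auto)
  ultimately have "realizable I (EO_gens_even r)
      (2 * length [1, R] + 2 * (r - 1) + (2 * length [2..R] + 2 * (r - 1)))
      (\<lambda>v. levi r p1 U (levi r p2 U v))"
    by (rule realizable_comp)
  moreover have "2 * length [1, R] + 2 * (r - 1) + (2 * length [2..R] + 2 * (r - 1)) = 6 * r - 2"
    using R_bounds by simp
  moreover have "(\<lambda>v. levi r p1 U (levi r p2 U v)) = levi r p U"
    using levi_levi_left[OF U_p1 U_p2] by (simp add: p2_def fun_eq_iff)
  ultimately show ?thesis by simp
qed

lemma realizable_deformation:
  assumes I: "orth_index r I"
  shows "realizable I (EO_gens_even r) (7 * r - 3) (\<lambda>v. levi r (unit_vec R) nu (levi r p U v))"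
proof -
  have "realizable I (EO_gens_even r) (length [1..R - 1]) (levi r (unit_vec R) nu)"
    using R_bounds nu_last by (intro realizable_levi_row[OF I]) auto
  from realizable_comp[OF this realizable_levi_p_U[OF I]] show ?thesis
    by (rule realizable_mono) (use R_bounds in auto)
qed

theorem deformation_even:
  assumes "e\<^sub>0 = 0"
  shows "\<exists>g\<in>EO_le_even r (r * (r - 1) div 2 + 8 * r - 4).
           \<forall>i\<in>idx_even r. deformed i = mat_vec (idx_even r) g b i"
proof -
  let ?F = "\<lambda>v. levi r (unit_vec R) nu (levi r p U (siegel r S v))"
  have "realizable (idx_even r) (EO_gens_even r) (7 * r - 3 + r * (r - 1) div 2) ?F"
    by (rule realizable_comp[OF realizable_deformation realizable_siegel])
      (simp_all add: orth_index_even S_alternating)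
  then have "realizable (idx_even r) (EO_gens_even r) (r * (r - 1) div 2 + 8 * r - 4) ?F"
    by (rule realizable_mono) auto
  moreover have "finite (idx_even r)" using orth_index_even unfolding orth_index_def by blast
  ultimately obtain g where g: "g \<in> EO_le_even r (r * (r - 1) div 2 + 8 * r - 4)"
    and g_b: "\<forall>i\<in>idx_even r. ?F b i = mat_vec (idx_even r) g b i"
    using realizable_EO_le[where v = b] unfolding EO_le_even_def by blast
  have "?F b i = deformed i" if "i \<in> idx_even r" for i
    by (rule deformation_stages) (use that assms in \<open>simp_all add: idx_even_def\<close>)
  with g g_b show ?thesis by auto
qed

definition "root_coeff = (\<lambda>k. - (z2 * w 0 * a k))"

lemma odd_deformation_stages:
  assumes e\<^sub>0: "e\<^sub>0 = s * w 0 * (2 * b 0 + z3 * w 0)" and i: "i \<in> idx_odd r"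
  shows "levi r (unit_vec R) nu (levi r p U (siegel r S (odd_root r root_coeff b))) i = deformed i"
proof -
  have coeff_b: "dot_pos r root_coeff b = - (z2 * w 0 * s)" by (simp add: root_coeff_def pairing)
  have v_pos: "odd_root r root_coeff b k = b k" if "1 \<le> k" for k
    using that by (simp add: odd_root_def)
  have v_neg: "odd_root r root_coeff b (-k) = b (-k) - s * z * e\<^sub>0 * a k" if "1 \<le> k" "k \<le> R" for k
    using that unfolding odd_root_def coeff_b
    by (simp add: root_coeff_def e\<^sub>0 z2_def z3_def algebra_simps power2_eq_square power3_eq_cube)
  show ?thesis
  proof (cases "i = 0")
    case True
    then show ?thesis unfolding levi_def siegel_def odd_root_def coeff_b
      by (simp add: deformed_def z2_def z3_def algebra_simps power3_eq_cube power2_eq_square)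
  next
    case False
    then show ?thesis
      using i v_pos v_neg by (intro deformation_stages) (auto simp: idx_odd_def)
  qed
qed

theorem deformation_odd:
  assumes "e\<^sub>0 = s * w 0 * (2 * b 0 + z3 * w 0)"
  shows "\<exists>g\<in>EO_le_odd r (r * (r - 1) div 2 + 9 * r - 5).
           \<forall>i\<in>idx_odd r. deformed i = mat_vec (idx_odd r) g b i"
proof -
  let ?F = "\<lambda>v. levi r (unit_vec R) nu (levi r p U (siegel r S (odd_root r root_coeff v)))"
  have levis: "realizable (idx_odd r) (EO_gens_odd r) (7 * r - 3)
      (\<lambda>v. levi r (unit_vec R) nu (levi r p U v))"
    using realizable_deformation[OF orth_index_odd] by (rule realizable_mono) (auto simp: EO_gens_odd_def)
  have roots: "realizable (idx_odd r) (EO_gens_odd r) (r * (r - 1) div 2 + length [1..R - 1])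
      (\<lambda>v. siegel r S (odd_root r root_coeff v))"
    using a_last by (intro realizable_siegel_odd_root orth_index_odd S_alternating)
      (auto simp: idx_odd_def root_coeff_def)
  from realizable_comp[OF levis roots]
  have "realizable (idx_odd r) (EO_gens_odd r) (r * (r - 1) div 2 + 9 * r - 5) ?F"
    by (rule realizable_mono) (use R_bounds in auto)
  moreover have "finite (idx_odd r)" using orth_index_odd unfolding orth_index_def by blast
  ultimately obtain g where g: "g \<in> EO_le_odd r (r * (r - 1) div 2 + 9 * r - 5)"
    and g_b: "\<forall>i\<in>idx_odd r. ?F b i = mat_vec (idx_odd r) g b i"
    using realizable_EO_le[where v = b] unfolding EO_le_odd_def by blast
  moreover have "\<forall>i\<in>idx_odd r. deformed i = mat_vec (idx_odd r) g b i"
    using g_b odd_deformation_stages[OF assms] by simp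
  ultimately show ?thesis by blast
qed

end

section \<open>Taylor expansion of the substitution\<close>

definition lift_eval :: "'a::comm_ring_1 poly poly \<Rightarrow> 'a poly \<Rightarrow> 'a poly poly" where
  "lift_eval t p = poly (map_poly (\<lambda>c. [:[:c:]:]) p) t"

lemma lift_eval_0 [simp]: "lift_eval t 0 = 0"
  by (simp add: lift_eval_def)

lemma lift_eval_pCons: "lift_eval t (pCons c p) = [:[:c:]:] + t * lift_eval t p"
  by (simp add: lift_eval_def map_poly_pCons)

lemma lift_eval_const: "lift_eval t [:c:] = [:[:c:]:]"
  by (simp add: lift_eval_pCons)

lemma lift_eval_add: "lift_eval t (p + q) = lift_eval t p + lift_eval t q"
proof (induction p q rule: poly_induct2)
  case 0
  then show ?case by simp
next
  case (pCons a p b q)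
  have "[:[:a + b:]:] = [:[:a:]:] + [:[:b:]:]" by simp
  then show ?case by (simp add: lift_eval_pCons pCons.IH algebra_simps)
qed

lemma lift_eval_smult: "lift_eval t (smult a q) = [:[:a:]:] * lift_eval t q"
proof (induction q)
  case 0
  then show ?case by simp
next
  case (pCons b q)
  have "[:[:a * b:]:] = [:[:a:]:] * [:[:b:]:]" by simp
  then show ?case by (simp add: lift_eval_pCons pCons.IH algebra_simps)
qed

lemma lift_eval_mult: "lift_eval t (p * q) = lift_eval t p * lift_eval t q"
proof (induction p)
  case 0
  then show ?case by simp
next
  case (pCons a p)
  then show ?case by (simp add: lift_eval_add lift_eval_smult lift_eval_pCons algebra_simps)
qed

lemma lift_eval_sum: "lift_eval t (\<Sum>j\<in>A. f j) = (\<Sum>j\<in>A. lift_eval t (f j))"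
  by (induction A rule: infinite_finite_induct) (simp_all add: lift_eval_add)

lemma pcompose_lift_eval: "pcompose (lift_eval t p) u = lift_eval (pcompose t u) p"
  by (induction p) (simp_all add: lift_eval_pCons pcompose_add pcompose_mult)

definition taylor :: "'a::comm_ring_1 poly \<Rightarrow> 'a poly poly" where
  "taylor = lift_eval ([:[:0, 1:]:] + [:0, 1:])"

definition taylor_tail :: "'a::comm_ring_1 poly \<Rightarrow> 'a poly poly" where
  "taylor_tail p = synthetic_div (taylor p) 0"

definition subst_tail :: "'a::comm_ring_1 \<Rightarrow> nat \<Rightarrow> 'a poly \<Rightarrow> 'a poly poly" where
  "subst_tail s m p = pcompose (taylor_tail p) [:0, [:s ^ m:]:]"

lemma taylor_eq: "taylor p = [:p:] + [:0, 1:] * taylor_tail p"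
proof -
  have "poly (taylor p) 0 = p"
    by (induction p) (simp_all add: taylor_def lift_eval_pCons mult_pCons_left)
  then show ?thesis
    using synthetic_div_correct'[of 0 "taylor p"] by (simp add: taylor_tail_def add.commute)
qed

lemma subst_yz_eq: "subst_yz s m p = [:p:] + [:0, [:s ^ m:]:] * subst_tail s m p"
proof -
  have "subst_yz s m p = lift_eval (pcompose ([:[:0, 1:]:] + [:0, 1:]) [:0, [:s ^ m:]:]) p"
    by (simp add: subst_yz_def lift_eval_def pcompose_add pcompose_pCons)
  also have "\<dots> = pcompose (taylor p) [:0, [:s ^ m:]:]"
    by (simp add: taylor_def pcompose_lift_eval)
  also have "\<dots> = [:p:] + [:0, [:s ^ m:]:] * subst_tail s m p"
    by (simp add: taylor_eq subst_tail_def pcompose_add pcompose_mult pcompose_pCons)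
  finally show ?thesis .
qed

lemma taylor_mult: "taylor (p * q) = taylor p * taylor q"
  by (simp add: taylor_def lift_eval_mult)

lemma taylor_sum: "taylor (\<Sum>j\<in>A. f j) = (\<Sum>j\<in>A. taylor (f j))"
  by (simp add: taylor_def lift_eval_sum)

text \<open>If \<open>\<Sum> f\<^sub>j g\<^sub>j\<close> is a constant, the same holds after the substitution, which yields a relation
  between the tails. It has to be derived before scaling \<open>z\<close> by \<open>s\<^sup>m\<close>, since \<open>s\<close> may be a
  zero divisor, while \<open>z\<close> is not.\<close>

lemma subst_tail_bilinear:
  assumes "(\<Sum>j\<in>J. f j * g j) = [:c:]"
  shows "(\<Sum>j\<in>J. subst_tail s m (f j) * [:g j:] + [:f j:] * subst_tail s m (g j)
            + [:0, [:s ^ m:]:] * subst_tail s m (f j) * subst_tail s m (g j)) = 0"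
proof -
  define E where "E = (\<Sum>j\<in>J. taylor_tail (f j) * [:g j:] + [:f j:] * taylor_tail (g j)
                       + [:0, 1:] * taylor_tail (f j) * taylor_tail (g j))"
  have "taylor (\<Sum>j\<in>J. f j * g j) = (\<Sum>j\<in>J. ([:f j:] + [:0, 1:] * taylor_tail (f j))
                                              * ([:g j:] + [:0, 1:] * taylor_tail (g j)))"
    unfolding taylor_sum taylor_mult by (simp only: taylor_eq)
  also have "\<dots> = (\<Sum>j\<in>J. [:f j * g j:] + [:0, 1:] * (taylor_tail (f j) * [:g j:]
      + [:f j:] * taylor_tail (g j) + [:0, 1:] * taylor_tail (f j) * taylor_tail (g j)))"
    by (rule sum.cong) (simp_all add: algebra_simps)
  also have "\<dots> = [:\<Sum>j\<in>J. f j * g j:] + [:0, 1:] * E"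
    unfolding E_def sum_distrib_left by (simp only: sum.distrib sum_to_poly)
  finally have "[:0, 1:] * E = 0"
    by (simp add: assms taylor_def lift_eval_const)
  then have "pcompose E [:0, [:s ^ m:]:] = 0" by simp
  moreover have "pcompose [:0, 1:] u = u" for u :: "'a poly poly" by (simp add: pcompose_pCons)
  ultimately show ?thesis
    unfolding E_def subst_tail_def pcompose_sum pcompose_add pcompose_mult pcompose_const by simp
qed

lemma ideal_gen_image_coeffs:
  assumes "x \<in> ideal_gen (f ` I)" and "finite I"
  obtains a where "(\<Sum>i\<in>I. a i * f i) = x"
proof -
  obtain G c where G: "finite G" "G \<subseteq> f ` I" and x: "x = (\<Sum>g\<in>G. c g * g)"
    using assms(1) unfolding ideal_gen_def by blast
  have "\<exists>a. (\<Sum>g\<in>G. c g * g) = (\<Sum>i\<in>I. a i * f i)"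
    using G
  proof (induction G rule: finite_induct)
    case empty
    then show ?case by (intro exI[of _ "\<lambda>i. 0"]) simp
  next
    case (insert g G)
    obtain a where a: "(\<Sum>g\<in>G. c g * g) = (\<Sum>i\<in>I. a i * f i)" using insert by auto
    obtain i\<^sub>0 where i\<^sub>0: "i\<^sub>0 \<in> I" "g = f i\<^sub>0" using insert by auto
    have "(\<Sum>i\<in>I. (a i + (if i = i\<^sub>0 then c g else 0)) * f i) = (\<Sum>i\<in>I. a i * f i) + c g * g"
      using assms(2) i\<^sub>0 by (simp add: distrib_right sum.distrib if_distrib[of "\<lambda>y. y * _"] cong: if_cong)
    then show ?case using insert a by (intro exI[of _ "\<lambda>i. a i + (if i = i\<^sub>0 then c g else 0)"]) simp
  qed
  then show ?thesis using that x by metis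
qed

lemma const_cube_mult_x: "[:[:s:]:] ^ 3 * [:0, 1:] = [:0, [:s ^ 3:]:]"
  by (simp add: poly_const_pow mult_pCons_right)

lemma column_deformation_of_ideal:
  fixes b :: "'b::comm_ring_1 poly vec" and s :: 'b
  defines "B \<equiv> \<lambda>k. [:b k:]" and "W \<equiv> \<lambda>k. subst_tail s 3 (b k)"
  assumes r: "r \<ge> 3" and s: "[:s:] \<in> ideal_gen (b ` {1..int r - 1})"
    and isotropy_defect:
      "[:[:s:]:] * (dot_neg r B W + dot_neg r W B + [:[:s:]:] ^ 3 * [:0, 1:] * dot_neg r W W) + e\<^sub>0 = 0"
  shows "\<exists>a a'. column_deformation r [:[:s:]:] [:0, 1:] e\<^sub>0 B W a a'"
proof -
  define L where "L = {1..int r - 1}"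
  obtain c where c: "(\<Sum>i\<in>L. c i * b i) = [:s:]"
    using ideal_gen_image_coeffs[OF s] unfolding L_def by blast
  define a where "a = (\<lambda>k. if k \<in> L then [:c k:] else 0)"
  define a' where "a' = (\<lambda>k. if k \<in> L then subst_tail s 3 (c k) else 0)"
  have L: "L \<subseteq> {1..int r}" by (auto simp: L_def)
  have "dot_pos r a B = (\<Sum>k\<in>L. [:c k:] * [:b k:])"
    unfolding a_def B_def dot_pos_restrict[OF L] ..
  also have "\<dots> = [:\<Sum>k\<in>L. c k * b k:]"
    unfolding sum_to_poly[symmetric] by (rule sum.cong) simp_all
  finally have "dot_pos r a B = [:[:s:]:]" unfolding c .
  moreover have "dot_pos r a' B + dot_pos r a W + [:[:s:]:] ^ 3 * [:0, 1:] * dot_pos r a' W = 0"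
  proof -
    have "dot_pos r a' B + dot_pos r a W + [:0, [:s ^ 3:]:] * dot_pos r a' W
        = (\<Sum>k\<in>L. subst_tail s 3 (c k) * [:b k:] + [:c k:] * subst_tail s 3 (b k)
             + [:0, [:s ^ 3:]:] * subst_tail s 3 (c k) * subst_tail s 3 (b k))"
      unfolding a_def a'_def B_def W_def dot_pos_restrict[OF L]
      by (simp only: sum.distrib sum_distrib_left mult.assoc)
    then show ?thesis unfolding const_cube_mult_x using subst_tail_bilinear[OF c] by simp
  qed
  moreover have "a (int r) = 0" "a' (int r) = 0" by (simp_all add: a_def a'_def L_def)
  ultimately have "column_deformation r [:[:s:]:] [:0, 1:] e\<^sub>0 B W a a'"
    using r isotropy_defect by unfold_locales auto
  then show ?thesis by blast
qed

lemma dot_neg_tails: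
  "dot_neg r B W + dot_neg r W B + X * dot_neg r W W
     = (\<Sum>j\<in>{1..int r}. W j * B (-j) + B j * W (-j) + X * W j * W (-j))"
  by (simp add: dot_neg_def sum.distrib sum_distrib_left mult_ac)

lemma IUm_even_subst_yz:
  fixes b :: "'b::comm_ring_1 poly vec"
  assumes r: "r \<ge> 3" and b: "b \<in> IUm_even r" and s: "[:s:] \<in> ideal_gen (b ` {1..int r - 1})"
  shows "\<exists>g\<in>EO_le_even r (r * (r - 1) div 2 + 8 * r - 4).
           \<forall>i\<in>idx_even r. subst_yz s 3 (b i) = mat_vec (idx_even r) g (\<lambda>k. [:b k:]) i"
proof -
  define B where "B = (\<lambda>k. [:b k:])"
  define W where "W = (\<lambda>k. subst_tail s 3 (b k))"
  define X where "X = [:0, [:s ^ 3:]:]"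
  have "(\<Sum>j\<in>{1..int r}. b j * b (-j)) = [:0:]" using b by (simp add: IUm_even_def q_even_def)
  from subst_tail_bilinear[OF this, of s 3]
  have "(\<Sum>j\<in>{1..int r}. W j * B (-j) + B j * W (-j) + X * W j * W (-j)) = 0"
    unfolding B_def W_def X_def .
  then have "[:[:s:]:] * (dot_neg r B W + dot_neg r W B + [:[:s:]:] ^ 3 * [:0, 1:] * dot_neg r W W) + 0 = 0"
    unfolding const_cube_mult_x X_def[symmetric] dot_neg_tails by simp
  then obtain a a' where "column_deformation r [:[:s:]:] [:0, 1:] 0 B W a a'"
    using column_deformation_of_ideal[OF r s] unfolding B_def W_def by blast
  then interpret column_deformation r "[:[:s:]:]" "[:0, 1:]" 0 B W a a' .
  have "subst_yz s 3 (b i) = deformed i" for i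
    unfolding deformed_def z3_def const_cube_mult_x by (simp add: subst_yz_eq B_def W_def)
  then show ?thesis using deformation_even unfolding B_def by simp
qed

lemma IUm_odd_subst_yz:
  fixes b :: "'b::comm_ring_1 poly vec"
  assumes r: "r \<ge> 3" and b: "b \<in> IUm_odd r" and s: "[:s:] \<in> ideal_gen (b ` {1..int r - 1})"
  shows "\<exists>g\<in>EO_le_odd r (r * (r - 1) div 2 + 9 * r - 5).
           \<forall>i\<in>idx_odd r. subst_yz s 3 (b i) = mat_vec (idx_odd r) g (\<lambda>k. [:b k:]) i"
proof -
  define B where "B = (\<lambda>k. [:b k:])"
  define W where "W = (\<lambda>k. subst_tail s 3 (b k))"
  define X where "X = [:0, [:s ^ 3:]:]"
  define e\<^sub>0 where "e\<^sub>0 = [:[:s:]:] * W 0 * (2 * B 0 + X * W 0)"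
  have split: "{0..int r} = insert 0 {1..int r}" by auto
  have "(\<Sum>j\<in>{0..int r}. b j * b (-j)) = [:0:]"
    using b unfolding split by (simp add: IUm_odd_def q_odd_def power2_eq_square)
  from subst_tail_bilinear[OF this, of s 3]
  have "(\<Sum>j\<in>insert 0 {1..int r}. W j * B (-j) + B j * W (-j) + X * W j * W (-j)) = 0"
    unfolding B_def W_def X_def split .
  moreover have "W 0 * B 0 + B 0 * W 0 + X * W 0 * W 0 = W 0 * (2 * B 0 + X * W 0)"
    by (simp add: algebra_simps mult_2)
  ultimately have "W 0 * (2 * B 0 + X * W 0)
      + (\<Sum>j\<in>{1..int r}. W j * B (-j) + B j * W (-j) + X * W j * W (-j)) = 0"
    by simp
  moreover have "[:[:s:]:] * (dot_neg r B W + dot_neg r W B + [:[:s:]:] ^ 3 * [:0, 1:] * dot_neg r W W) + e\<^sub>0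
      = [:[:s:]:] * (W 0 * (2 * B 0 + X * W 0)
          + (\<Sum>j\<in>{1..int r}. W j * B (-j) + B j * W (-j) + X * W j * W (-j)))"
    unfolding const_cube_mult_x X_def[symmetric] dot_neg_tails e\<^sub>0_def
    by (simp only: distrib_left mult.assoc add.commute)
  ultimately have "[:[:s:]:] * (dot_neg r B W + dot_neg r W B + [:[:s:]:] ^ 3 * [:0, 1:] * dot_neg r W W)
      + e\<^sub>0 = 0"
    by simp
  then obtain a a' where "column_deformation r [:[:s:]:] [:0, 1:] e\<^sub>0 B W a a'"
    using column_deformation_of_ideal[OF r s] unfolding B_def W_def by blast
  then interpret column_deformation r "[:[:s:]:]" "[:0, 1:]" e\<^sub>0 B W a a' .
  have "subst_yz s 3 (b i) = deformed i" for i
    unfolding deformed_def z3_def const_cube_mult_x by (simp add: subst_yz_eq B_def W_def)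
  moreover have "e\<^sub>0 = [:[:s:]:] * W 0 * (2 * B 0 + z3 * W 0)"
    unfolding e\<^sub>0_def X_def z3_def const_cube_mult_x ..
  ultimately show ?thesis using deformation_odd unfolding B_def by simp
qed

theorem lemma12:
  fixes r :: nat
  assumes "noetherian TYPE('b::comm_ring_1)"
    and "r \<ge> 3"
  shows "(\<forall>(b :: 'b poly vec) (s :: 'b).
            b \<in> IUm_even r \<and> [:s:] \<in> ideal_gen (b ` {1..int r - 1}) \<longrightarrow>
            (\<exists>m::nat. \<exists>g \<in> EO_le_even r (r * (r - 1) div 2 + 8 * r - 4).
               \<forall>i\<in>idx_even r. subst_yz s m (b i) = mat_vec (idx_even r) g (\<lambda>k. [:b k:]) i))
       \<and> (\<forall>(b :: 'b poly vec) (s :: 'b).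
            b \<in> IUm_odd r \<and> [:s:] \<in> ideal_gen (b ` {1..int r - 1}) \<longrightarrow>
            (\<exists>m::nat. \<exists>g \<in> EO_le_odd r (r * (r - 1) div 2 + 9 * r - 5).
               \<forall>i\<in>idx_odd r. subst_yz s m (b i) = mat_vec (idx_odd r) g (\<lambda>k. [:b k:]) i))"
  using IUm_even_subst_yz[OF assms(2)] IUm_odd_subst_yz[OF assms(2)] by blast

end
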